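(* Let $G$ be a digraph with a fixed upward planar drawing and let $s,t\in V(G)$ be such that there is a directed path from $s$ to $t$. Then there is a unique right-most $s$-$t$ path in $G$.
   Context: An upward planar drawing of a digraph is a plane drawing (no edge crossings) in which every directed edge is a curve monotone increasing in the $y$-direction from tail to head. A path is identified with the set of points of $\mathbb{R}^2$ in its drawing. For a path $P$ with endpoints $(x,y)$, $(x',y')$, $y\le y'$, let $\mathrm{Right}(P):=\{(u,v)\in\mathbb{R}^2: y\le v\le y',\ u'<u \text{ for all } u' \text{ with } (u',v)\in P\}$. A right-most $s$-$t$ path is a directed $s$-$t$ path $P$ such that for all directed $s$-$t$ paths $P'$, $P\subseteq P'\cup\mathrm{Right}(P')$. *)

theory Defs
  imports "HOL-Analysis.Analysis"
begin

text \<open>A drawing consists of a point pos v for every vertex (x-coordinate fst, y-coordinate snd)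
  and a curve gam e :: real \<Rightarrow> real \<times> real, parametrised on [0,1], for every edge e.\<close>

definition upward_planar_drawing ::
  "'v set \<Rightarrow> ('v \<times> 'v) set \<Rightarrow> ('v \<Rightarrow> real \<times> real) \<Rightarrow> ('v \<times> 'v \<Rightarrow> real \<Rightarrow> real \<times> real) \<Rightarrow> bool"
where
  "upward_planar_drawing V E pos gam \<longleftrightarrow>
     inj_on pos V \<and>
     (\<forall>e\<in>E. continuous_on {0..1} (gam e)
            \<and> gam e 0 = pos (fst e) \<and> gam e 1 = pos (snd e)
            \<and> strict_mono_on {0..1} (\<lambda>r. snd (gam e r))) \<and>
     (\<forall>e\<in>E. \<forall>v\<in>V. pos v \<in> gam e ` {0..1} \<longrightarrow> v = fst e \<or> v = snd e) \<and>
     (\<forall>e\<in>E. \<forall>e'\<in>E. e \<noteq> e' \<longrightarrow>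
        gam e ` {0..1} \<inter> gam e' ` {0..1} \<subseteq> pos ` ({fst e, snd e} \<inter> {fst e', snd e'}))"

definition dir_path :: "('v \<times> 'v) set \<Rightarrow> 'v \<Rightarrow> 'v \<Rightarrow> 'v list \<Rightarrow> bool" where
  "dir_path E s t ps \<longleftrightarrow> ps \<noteq> [] \<and> hd ps = s \<and> last ps = t \<and>
     (\<forall>i. Suc i < length ps \<longrightarrow> (ps ! i, ps ! Suc i) \<in> E)"

definition path_points ::
  "('v \<Rightarrow> real \<times> real) \<Rightarrow> ('v \<times> 'v \<Rightarrow> real \<Rightarrow> real \<times> real) \<Rightarrow> 'v list \<Rightarrow> (real \<times> real) set"
where
  "path_points pos gam ps = pos ` set ps \<union>
     (\<Union>i\<in>{i. Suc i < length ps}. gam (ps ! i, ps ! Suc i) ` {0..1})"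

definition Right_region :: "real \<Rightarrow> real \<Rightarrow> (real \<times> real) set \<Rightarrow> (real \<times> real) set" where
  "Right_region y y' P = {(u, v). y \<le> v \<and> v \<le> y' \<and> (\<forall>u'. (u', v) \<in> P \<longrightarrow> u' < u)}"

definition Right_path ::
  "('v \<Rightarrow> real \<times> real) \<Rightarrow> ('v \<times> 'v \<Rightarrow> real \<Rightarrow> real \<times> real) \<Rightarrow> 'v list \<Rightarrow> (real \<times> real) set"
where
  "Right_path pos gam ps = Right_region (snd (pos (hd ps))) (snd (pos (last ps))) (path_points pos gam ps)"

definition rightmost_path ::
  "('v \<times> 'v) set \<Rightarrow> ('v \<Rightarrow> real \<times> real) \<Rightarrow> ('v \<times> 'v \<Rightarrow> real \<Rightarrow> real \<times> real) \<Rightarrow> 'v \<Rightarrow> 'v \<Rightarrow> 'v list \<Rightarrow> bool"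
where
  "rightmost_path E pos gam s t ps \<longleftrightarrow> dir_path E s t ps \<and>
     (\<forall>ps'. dir_path E s t ps' \<longrightarrow>
        path_points pos gam ps \<subseteq> path_points pos gam ps' \<union> Right_path pos gam ps')"

end

theory Submission
  imports Defs
begin

(* Heights increase strictly along every edge, so the drawing of a directed a-b path meets every
   horizontal line between a and b in exactly one point: it is the graph of a continuous function of
   the height, and one path lies right of another when this function is pointwise larger.  Two a-b
   paths sharing only their end vertices cannot cross by planarity, so by the intermediate value
   theorem one of them lies right of the other.  Cutting two arbitrary s-t paths at their lowest
   common vertex above s and recursing on the remaining parts yields an s-t path right of both; as
   there are finitely many s-t paths, one of them lies right of all of them, which is exactly a
   right-most path.  Two right-most paths lie right of each other, hence have the same drawing and
   the same vertices, and a path is determined by its vertex set since heights increase along it. *)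

lemma finite_directed_has_upper_bound:
  assumes "finite S" "S \<noteq> {}"
    and trans: "\<And>x y z. x \<in> S \<Longrightarrow> y \<in> S \<Longrightarrow> z \<in> S \<Longrightarrow> r x y \<Longrightarrow> r y z \<Longrightarrow> r x z"
    and directed: "\<And>x y. x \<in> S \<Longrightarrow> y \<in> S \<Longrightarrow> \<exists>z\<in>S. r z x \<and> r z y"
  shows "\<exists>z\<in>S. \<forall>x\<in>S. r z x"
proof -
  have "\<exists>z\<in>S. \<forall>x\<in>T. r z x" if "T \<subseteq> S" for T
    using finite_subset[OF that \<open>finite S\<close>] that
  proof (induction T rule: finite_induct)
    case empty
    then show ?case
      using \<open>S \<noteq> {}\<close> by blast
  next
    case (insert x T)
    then obtain z where z: "z \<in> S" "\<forall>y\<in>T. r z y"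
      by blast
    moreover obtain z' where "z' \<in> S" "r z' z" "r z' x"
      using directed[OF z(1), of x] insert.prems by blast
    moreover have "r z' y" if "y \<in> T" for y
      using trans[OF \<open>z' \<in> S\<close> z(1) _ \<open>r z' z\<close>] z(2) that insert.prems by blast
    ultimately show ?case
      by blast
  qed
  then show ?thesis
    by blast
qed

section \<open>Sets that are graphs over the height axis\<close>

definition height_graph :: "(real \<times> real) set \<Rightarrow> real \<Rightarrow> real \<Rightarrow> bool" where
  "height_graph A lo hi \<longleftrightarrow>
     compact A \<and> snd ` A \<subseteq> {lo..hi} \<and> (\<forall>w\<in>{lo..hi}. \<exists>!x. (x, w) \<in> A)"

(* junk outside the height range of A *)
definition abscissa :: "(real \<times> real) set \<Rightarrow> real \<Rightarrow> real" where
  "abscissa A w = (THE x. (x, w) \<in> A)"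

definition right_of :: "(real \<times> real) set \<Rightarrow> (real \<times> real) set \<Rightarrow> bool" where
  "right_of A B \<longleftrightarrow> (\<forall>x x' w. (x, w) \<in> A \<longrightarrow> (x', w) \<in> B \<longrightarrow> x' \<le> x)"

lemma height_graph_singleton: "height_graph {p} (snd p) (snd p)"
  unfolding height_graph_def by (cases p) auto

lemma height_graph_compact: "height_graph A lo hi \<Longrightarrow> compact A"
  unfolding height_graph_def by simp

lemma height_graph_snd: "height_graph A lo hi \<Longrightarrow> (x, w) \<in> A \<Longrightarrow> w \<in> {lo..hi}"
  unfolding height_graph_def by (metis image_subset_iff snd_conv)

lemma height_graph_unique:
  assumes "height_graph A lo hi" "(x, w) \<in> A" "(x', w) \<in> A"
  shows "x = x'"
proof -
  have "\<exists>!x. (x, w) \<in> A"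
    using assms(1) height_graph_snd[OF assms(1,2)] unfolding height_graph_def by simp
  then show ?thesis
    using assms(2,3) by blast
qed

lemma height_graph_abscissa:
  assumes "height_graph A lo hi" "w \<in> {lo..hi}"
  shows "(abscissa A w, w) \<in> A"
proof -
  have "\<exists>!x. (x, w) \<in> A"
    using assms unfolding height_graph_def by simp
  then show ?thesis
    unfolding abscissa_def by (rule theI')
qed

lemma abscissa_eqI: "height_graph A lo hi \<Longrightarrow> (x, w) \<in> A \<Longrightarrow> abscissa A w = x"
  by (meson height_graph_abscissa height_graph_snd height_graph_unique)

lemma height_graph_curve:
  fixes g :: "real \<Rightarrow> real \<times> real"
  assumes cont: "continuous_on {0..1} g" and mono: "strict_mono_on {0..1} (\<lambda>r. snd (g r))"
  shows "height_graph (g ` {0..1}) (snd (g 0)) (snd (g 1))"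
  unfolding height_graph_def
proof (intro conjI ballI)
  show "compact (g ` {0..1})"
    using cont by (intro compact_continuous_image) auto
  show "snd ` g ` {0..1} \<subseteq> {snd (g 0)..snd (g 1)}"
    unfolding image_image image_subset_iff
  proof
    fix r :: real assume "r \<in> {0..1}"
    then show "snd (g r) \<in> {snd (g 0)..snd (g 1)}"
      using strict_mono_on_leD[OF mono, of 0 r] strict_mono_on_leD[OF mono, of r 1] by simp
  qed
  fix w assume "w \<in> {snd (g 0)..snd (g 1)}"
  then have "\<exists>r. 0 \<le> r \<and> r \<le> 1 \<and> snd (g r) = w"
    by (intro IVT' continuous_on_snd cont) auto
  then obtain r where r: "r \<in> {0..1}" "snd (g r) = w"
    by auto
  have "(fst (g r), w) \<in> g ` {0..1}"
    by (rule image_eqI[of _ g r]) (use r in \<open>auto simp: prod_eq_iff\<close>)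
  moreover have "x = fst (g r)" if x: "(x, w) \<in> g ` {0..1}" for x
  proof -
    obtain r' where r': "(x, w) = g r'" "r' \<in> {0..1}"
      using x by (rule imageE)
    have "r' = r"
      by (rule inj_onD[OF strict_mono_on_imp_inj_on[OF mono]]) (use r r'(2) in \<open>auto simp flip: r'(1)\<close>)
    then show ?thesis
      using arg_cong[OF r'(1), of fst] by simp
  qed
  ultimately show "\<exists>!x. (x, w) \<in> g ` {0..1}"
    by blast
qed

lemma height_graph_Un:
  assumes A: "height_graph A lo m" and B: "height_graph B m hi" and "(x0, m) \<in> A" "(x0, m) \<in> B"
  shows "height_graph (A \<union> B) lo hi"
proof -
  have m: "lo \<le> m" "m \<le> hi"
    using height_graph_snd[OF A] height_graph_snd[OF B] assms(3,4) by auto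
  have meet: "x = x'" if "(x, w) \<in> A" "(x', w) \<in> B" for x x' w
  proof -
    have "w = m"
      using height_graph_snd[OF A that(1)] height_graph_snd[OF B that(2)] by simp
    then show ?thesis
      using height_graph_unique[OF A, of x m x0] height_graph_unique[OF B, of x' m x0] that assms(3,4)
      by simp
  qed
  show ?thesis
    unfolding height_graph_def
  proof (intro conjI ballI)
    show "compact (A \<union> B)"
      using height_graph_compact[OF A] height_graph_compact[OF B] by (rule compact_Un)
    show "snd ` (A \<union> B) \<subseteq> {lo..hi}"
      using m by (auto dest: height_graph_snd[OF A] height_graph_snd[OF B])
    fix w assume "w \<in> {lo..hi}"
    have "\<exists>x. (x, w) \<in> A \<union> B"
      using height_graph_abscissa[OF A, of w] height_graph_abscissa[OF B, of w] \<open>w \<in> {lo..hi}\<close>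
      by (cases "w \<le> m") auto
    moreover have "x = x'" if "(x, w) \<in> A \<union> B" "(x', w) \<in> A \<union> B" for x x'
      using that meet[of x w x'] meet[of x' w x]
        height_graph_unique[OF A, of x w x'] height_graph_unique[OF B, of x w x'] by auto
    ultimately show "\<exists>!x. (x, w) \<in> A \<union> B"
      by blast
  qed
qed

lemma continuous_on_abscissa:
  assumes A: "height_graph A lo hi"
  shows "continuous_on {lo..hi} (abscissa A)"
proof (rule continuous_from_closed_graph)
  have "compact A"
    using A by (rule height_graph_compact)
  then show "compact (fst ` A)"
    by (intro compact_continuous_image continuous_intros)
  show "abscissa A \<in> {lo..hi} \<rightarrow> fst ` A"
    using height_graph_abscissa[OF A] by force
  have "(\<lambda>w. (w, abscissa A w)) ` {lo..hi} = prod.swap ` A"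
  proof (intro equalityI subsetI)
    fix p assume "p \<in> (\<lambda>w. (w, abscissa A w)) ` {lo..hi}"
    then obtain w where "w \<in> {lo..hi}" "p = prod.swap (abscissa A w, w)"
      by auto
    then show "p \<in> prod.swap ` A"
      using height_graph_abscissa[OF A] by blast
  next
    fix p assume "p \<in> prod.swap ` A"
    then obtain x w where "(x, w) \<in> A" "p = (w, x)"
      by auto
    then show "p \<in> (\<lambda>w. (w, abscissa A w)) ` {lo..hi}"
      using abscissa_eqI[OF A] height_graph_snd[OF A] by force
  qed
  moreover have "compact (prod.swap ` A)"
    using \<open>compact A\<close> by (intro compact_continuous_image continuous_intros)
  ultimately show "closed ((\<lambda>w. (w, abscissa A w)) ` {lo..hi})"
    by (simp add: compact_imp_closed)
qed

lemma right_of_refl: "height_graph A lo hi \<Longrightarrow> right_of A A"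
  unfolding right_of_def using height_graph_unique by fastforce

lemma right_of_trans:
  assumes "right_of A B" "right_of B C" "height_graph B lo hi" "height_graph C lo hi"
  shows "right_of A C"
  unfolding right_of_def
proof (intro allI impI)
  fix x x'' w assume "(x, w) \<in> A" "(x'', w) \<in> C"
  moreover have "(abscissa B w, w) \<in> B"
    using height_graph_snd[OF assms(4) \<open>(x'', w) \<in> C\<close>] height_graph_abscissa[OF assms(3)] by blast
  ultimately show "x'' \<le> x"
    using assms(1,2) unfolding right_of_def by force
qed

lemma right_of_antisym:
  assumes "height_graph A lo hi" "height_graph B lo hi" "right_of A B" "right_of B A"
  shows "A = B"
proof -
  have "C \<subseteq> D"
    if "height_graph C lo hi" "height_graph D lo hi" "right_of C D" "right_of D C" for C D
  proof clarify
    fix x w assume xw: "(x, w) \<in> C"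
    have D: "(abscissa D w, w) \<in> D"
      using height_graph_snd[OF that(1) xw] height_graph_abscissa[OF that(2)] by blast
    have "abscissa D w \<le> x" "x \<le> abscissa D w"
      using that(3,4) xw D unfolding right_of_def by blast+
    then show "(x, w) \<in> D"
      using D by simp
  qed
  then show ?thesis
    using assms by blast
qed

lemma mem_Right_region:
  "(x, w) \<in> Right_region lo hi B \<longleftrightarrow> lo \<le> w \<and> w \<le> hi \<and> (\<forall>x'. (x', w) \<in> B \<longrightarrow> x' < x)"
  unfolding Right_region_def by simp

lemma subset_Un_Right_region_iff_right_of:
  assumes A: "height_graph A lo hi" and B: "height_graph B lo hi"
  shows "A \<subseteq> B \<union> Right_region lo hi B \<longleftrightarrow> right_of A B"
proof
  assume sub: "A \<subseteq> B \<union> Right_region lo hi B"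
  show "right_of A B"
    unfolding right_of_def
  proof (intro allI impI)
    fix x x' w assume "(x, w) \<in> A" and x': "(x', w) \<in> B"
    then consider "(x, w) \<in> B" | "(x, w) \<in> Right_region lo hi B"
      using sub by blast
    then show "x' \<le> x"
    proof cases
      case 1
      then show ?thesis
        using height_graph_unique[OF B 1 x'] by simp
    next
      case 2
      then show ?thesis
        using x' unfolding mem_Right_region by fastforce
    qed
  qed
next
  assume right: "right_of A B"
  show "A \<subseteq> B \<union> Right_region lo hi B"
  proof
    fix p assume "p \<in> A"
    then obtain x w where p: "p = (x, w)" "(x, w) \<in> A"
      by (cases p) auto
    have "x' < x" if "(x', w) \<in> B" "(x, w) \<notin> B" for x'
    proof -
      have "x' \<le> x"
        using right p(2) that(1) unfolding right_of_def by blast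
      moreover have "x' \<noteq> x"
        using that by blast
      ultimately show ?thesis
        by simp
    qed
    then show "p \<in> B \<union> Right_region lo hi B"
      using height_graph_snd[OF A p(2)] unfolding p(1) Un_iff mem_Right_region by auto
  qed
qed

lemma right_of_Un:
  assumes A: "height_graph A lo m" and B: "height_graph B lo m"
    and A': "height_graph A' m hi" and B': "height_graph B' m hi"
    and common: "(x0, m) \<in> A \<inter> B \<inter> A' \<inter> B'"
    and "right_of A B" "right_of A' B'"
  shows "right_of (A \<union> A') (B \<union> B')"
proof -
  have meet: "x = x'"
    if "height_graph C lo m" "height_graph C' m hi" "(x0, m) \<in> C \<inter> C'" "(x, w) \<in> C" "(x', w) \<in> C'"
    for C C' x x' w
  proof -
    have "w = m"
      using height_graph_snd[OF that(1,4)] height_graph_snd[OF that(2,5)] by simp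
    then show ?thesis
      using that height_graph_unique by blast
  qed
  show ?thesis
    unfolding right_of_def
  proof (intro allI impI)
    fix x x' w assume "(x, w) \<in> A \<union> A'" "(x', w) \<in> B \<union> B'"
    moreover have "x = x'" if "(x, w) \<in> A" "(x', w) \<in> B'"
      using meet[OF A B' _ that] common by blast
    moreover have "x' = x" if "(x', w) \<in> B" "(x, w) \<in> A'"
      using meet[OF B A' _ that] common by blast
    ultimately show "x' \<le> x"
      using assms(6,7) unfolding right_of_def by fastforce
  qed
qed

lemma abscissa_eq_iff_common_height:
  assumes A: "height_graph A lo hi" and B: "height_graph B lo hi" and w: "w \<in> {lo..hi}"
  shows "abscissa A w = abscissa B w \<longleftrightarrow> w \<in> snd ` (A \<inter> B)"
proof
  assume "abscissa A w = abscissa B w"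
  then have "(abscissa A w, w) \<in> A \<inter> B"
    using height_graph_abscissa[OF A w] height_graph_abscissa[OF B w] by simp
  then show "w \<in> snd ` (A \<inter> B)"
    by (rule image_eqI[rotated]) simp
next
  assume "w \<in> snd ` (A \<inter> B)"
  then obtain p where "w = snd p" "p \<in> A \<inter> B"
    by (rule imageE)
  then have "(fst p, w) \<in> A" "(fst p, w) \<in> B"
    by simp_all
  then show "abscissa A w = abscissa B w"
    using abscissa_eqI[OF A] abscissa_eqI[OF B] by simp
qed

lemma not_right_of_imp_abscissa_less:
  assumes "\<not> right_of A B" and A: "height_graph A lo hi" and B: "height_graph B lo hi"
  shows "\<exists>w\<in>{lo..hi}. abscissa A w < abscissa B w"
proof -
  obtain x x' w where xw: "(x, w) \<in> A" "(x', w) \<in> B" "x < x'"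
    using assms(1) unfolding right_of_def by (meson not_le)
  then have "abscissa A w < abscissa B w"
    using abscissa_eqI[OF A xw(1)] abscissa_eqI[OF B xw(2)] by simp
  then show ?thesis
    using height_graph_snd[OF A xw(1)] by blast
qed

lemma height_graphs_comparable:
  assumes A: "height_graph A lo hi" and B: "height_graph B lo hi"
    and meet: "snd ` (A \<inter> B) = {lo, hi}"
  shows "right_of A B \<or> right_of B A"
proof (rule ccontr)
  define g where "g = (\<lambda>w. abscissa A w - abscissa B w)"
  have g_zero_iff: "g w = 0 \<longleftrightarrow> w \<in> {lo, hi}" if "w \<in> {lo..hi}" for w
    using abscissa_eq_iff_common_height[OF A B that] meet unfolding g_def by simp
  assume "\<not> (right_of A B \<or> right_of B A)"
  then obtain w1 w2 where w1: "w1 \<in> {lo..hi}" "g w1 < 0" and w2: "w2 \<in> {lo..hi}" "0 < g w2"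
    using not_right_of_imp_abscissa_less[OF _ A B] not_right_of_imp_abscissa_less[OF _ B A]
    unfolding g_def by auto
  then have "w1 \<notin> {lo, hi}" "w2 \<notin> {lo, hi}"
    using g_zero_iff[of w1] g_zero_iff[of w2] by auto
  then have "w1 \<in> {lo<..<hi}" "w2 \<in> {lo<..<hi}"
    using w1(1) w2(1) by auto
  have "continuous_on {lo..hi} g"
    unfolding g_def using continuous_on_abscissa[OF A] continuous_on_abscissa[OF B]
    by (rule continuous_on_diff)
  then have "connected (g ` {lo<..<hi})"
    by (rule connected_continuous_image[OF continuous_on_subset]) auto
  then have "0 \<in> g ` {lo<..<hi}"
    by (rule connectedD_interval[of _ "g w1" "g w2" 0])
      (use \<open>w1 \<in> {lo<..<hi}\<close> \<open>w2 \<in> {lo<..<hi}\<close> w1(2) w2(2) in auto)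
  then obtain w where "0 = g w" "w \<in> {lo<..<hi}"
    by (rule imageE)
  then show False
    using g_zero_iff[of w] by auto
qed

section \<open>Directed paths as vertex lists\<close>

definition path_edges :: "'v list \<Rightarrow> ('v \<times> 'v) set" where
  "path_edges ps = set (zip ps (tl ps))"

lemma path_edges_Nil [simp]: "path_edges [] = {}"
  and path_edges_single [simp]: "path_edges [u] = {}"
  and path_edges_Cons_Cons [simp]: "path_edges (u # v # ps) = insert (u, v) (path_edges (v # ps))"
  unfolding path_edges_def by simp_all

lemma path_edges_append: "path_edges (X @ c # Y) = path_edges (X @ [c]) \<union> path_edges (c # Y)"
  by (induction X rule: induct_list012) auto

lemma path_edges_subset: "(u, v) \<in> path_edges ps \<Longrightarrow> u \<in> set ps \<and> v \<in> set ps"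
  unfolding path_edges_def by (cases ps) (auto dest: set_zip_leftD set_zip_rightD)

lemma path_points_edges:
  "path_points pos gam ps = pos ` set ps \<union> (\<Union>e\<in>path_edges ps. gam e ` {0..1})"
proof -
  have "path_edges ps = (\<lambda>i. (ps ! i, ps ! Suc i)) ` {i. Suc i < length ps}"
    unfolding path_edges_def by (auto simp: set_zip nth_tl)
  then show ?thesis
    unfolding path_points_def by simp
qed

lemma pos_in_path_points: "v \<in> set ps \<Longrightarrow> pos v \<in> path_points pos gam ps"
  unfolding path_points_def by simp

lemma path_points_single: "path_points pos gam [u] = {pos u}"
  unfolding path_points_def by simp

lemma path_points_Cons_Cons:
  "path_points pos gam (u # v # ps) = insert (pos u) (gam (u, v) ` {0..1} \<union> path_points pos gam (v # ps))"
  unfolding path_points_edges by auto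

lemma path_points_append:
  "path_points pos gam (X @ c # Y) = path_points pos gam (X @ [c]) \<union> path_points pos gam (c # Y)"
proof -
  have vertices: "set (X @ c # Y) = set (X @ [c]) \<union> set (c # Y)"
    by auto
  show ?thesis
    unfolding path_points_edges path_edges_append[of X c Y] vertices by blast
qed

lemma dir_path_iff_successively:
  "dir_path E a b ps \<longleftrightarrow> ps \<noteq> [] \<and> hd ps = a \<and> last ps = b \<and> successively (\<lambda>u v. (u, v) \<in> E) ps"
  unfolding dir_path_def successively_conv_nth by blast

lemma dir_path_Nil [simp]: "\<not> dir_path E a b []"
  unfolding dir_path_def by simp

lemma dir_path_single [simp]: "dir_path E a b [u] \<longleftrightarrow> u = a \<and> u = b"
  unfolding dir_path_def by auto

lemma dir_path_Cons_Cons [simp]: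
  "dir_path E a b (u # v # ps) \<longleftrightarrow> u = a \<and> (a, v) \<in> E \<and> dir_path E v b (v # ps)"
  unfolding dir_path_iff_successively by auto

lemma dir_path_Cons_hd: "dir_path E a b (u # ps) \<Longrightarrow> u = a"
  unfolding dir_path_def by simp

lemma dir_path_append:
  "dir_path E a b (X @ c # Y) \<longleftrightarrow> dir_path E a c (X @ [c]) \<and> dir_path E c b (c # Y)"
  by (induction X arbitrary: a rule: induct_list012) (auto dest: dir_path_Cons_hd)

lemma dir_path_edges: "dir_path E a b ps \<Longrightarrow> path_edges ps \<subseteq> E"
  unfolding dir_path_def path_edges_def by (auto simp: set_zip nth_tl)

section \<open>Paths in an upward planar drawing\<close>

locale upward_planar_graph =
  fixes V :: "'v set" and E :: "('v \<times> 'v) set"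
    and pos :: "'v \<Rightarrow> real \<times> real" and gam :: "'v \<times> 'v \<Rightarrow> real \<Rightarrow> real \<times> real"
  assumes edges_in_V: "E \<subseteq> V \<times> V"
    and drawing: "upward_planar_drawing V E pos gam"
begin

abbreviation height :: "'v \<Rightarrow> real" where
  "height v \<equiv> snd (pos v)"

abbreviation points :: "'v list \<Rightarrow> (real \<times> real) set" where
  "points \<equiv> path_points pos gam"

lemma inj_on_pos: "inj_on pos V"
  using drawing unfolding upward_planar_drawing_def by (rule conjunct1)

lemma edge_curve:
  assumes "(u, v) \<in> E"
  shows "continuous_on {0..1} (gam (u, v))" "gam (u, v) 0 = pos u" "gam (u, v) 1 = pos v"
    and "strict_mono_on {0..1} (\<lambda>r. snd (gam (u, v) r))"
  using conjunct1[OF conjunct2[OF drawing[unfolded upward_planar_drawing_def]]] assms by auto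

lemma vertex_on_edge:
  "e \<in> E \<Longrightarrow> v \<in> V \<Longrightarrow> pos v \<in> gam e ` {0..1} \<Longrightarrow> v = fst e \<or> v = snd e"
  using conjunct1[OF conjunct2[OF conjunct2[OF drawing[unfolded upward_planar_drawing_def]]]] by blast

lemma edges_meet_at_vertices:
  "e \<in> E \<Longrightarrow> e' \<in> E \<Longrightarrow> e \<noteq> e' \<Longrightarrow> p \<in> gam e ` {0..1} \<Longrightarrow> p \<in> gam e' ` {0..1}
    \<Longrightarrow> p \<in> pos ` ({fst e, snd e} \<inter> {fst e', snd e'})"
  using conjunct2[OF conjunct2[OF conjunct2[OF drawing[unfolded upward_planar_drawing_def]]]] by blast

lemma edge_height_graph:
  assumes "(u, v) \<in> E"
  shows "height_graph (gam (u, v) ` {0..1}) (height u) (height v)"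
  using height_graph_curve[OF edge_curve(1,4)[OF assms]] unfolding edge_curve(2,3)[OF assms] .

lemma edge_height_less: "(u, v) \<in> E \<Longrightarrow> height u < height v"
  using strict_mono_onD[OF edge_curve(4), of u v 0 1] edge_curve(2,3) by simp

lemma edge_ends_on_curve:
  assumes "(u, v) \<in> E"
  shows "pos u \<in> gam (u, v) ` {0..1}" "pos v \<in> gam (u, v) ` {0..1}"
  by (rule image_eqI[where x = 0], use edge_curve(2)[OF assms] in auto)
    (rule image_eqI[where x = 1], use edge_curve(3)[OF assms] in auto)

lemma path_points_Cons_edge:
  "(u, v) \<in> E \<Longrightarrow> points (u # v # ps) = gam (u, v) ` {0..1} \<union> points (v # ps)"
  unfolding path_points_Cons_Cons using edge_ends_on_curve(1) by blast

lemma dir_path_strict_sorted: "dir_path E a b P \<Longrightarrow> sorted_wrt (<) (map height P)"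
  unfolding dir_path_iff_successively sorted_wrt_map
  by (subst successively_conv_sorted_wrt[symmetric])
    (auto simp: transp_def elim!: successively_mono intro: edge_height_less)

lemma dir_path_distinct_heights: "dir_path E a b P \<Longrightarrow> distinct P \<and> inj_on height (set P)"
  using dir_path_strict_sorted strict_sorted_iff distinct_map by blast

lemma dir_path_vertices: "dir_path E a b P \<Longrightarrow> a \<in> V \<Longrightarrow> set P \<subseteq> V"
proof (induction P arbitrary: a rule: induct_list012)
  case (3 u v ps)
  then show ?case
    using edges_in_V by auto
qed auto

lemma path_points_height_graph: "dir_path E a b P \<Longrightarrow> height_graph (points P) (height a) (height b)"
proof (induction P arbitrary: a rule: induct_list012)
  case (2 u)
  then show ?case
    using height_graph_singleton[of "pos u"] by (auto simp: path_points_single)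
next
  case (3 u v ps)
  then have edge: "(a, v) \<in> E" and "u = a" and tail: "dir_path E v b (v # ps)"
    by simp_all
  have "pos v \<in> gam (a, v) ` {0..1}"
    using edge_ends_on_curve(2)[OF edge] .
  moreover have "pos v \<in> points (v # ps)"
    by (simp add: pos_in_path_points)
  ultimately show ?case
    using height_graph_Un[OF edge_height_graph[OF edge] "3.IH"(2)[OF tail], of "fst (pos v)"]
    unfolding \<open>u = a\<close> path_points_Cons_edge[OF edge] by simp
qed simp

lemma dir_path_height_range: "dir_path E a b P \<Longrightarrow> v \<in> set P \<Longrightarrow> height v \<in> {height a..height b}"
  using height_graph_snd[OF path_points_height_graph, of a b P "fst (pos v)" "height v"]
  by (simp add: pos_in_path_points)

lemma dir_path_loop:
  assumes "dir_path E a a P"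
  shows "P = [a]"
proof (cases P rule: remdups_adj.cases)
  case 1
  then show ?thesis
    using assms by (simp add: dir_path_def)
next
  case (2 u)
  then show ?thesis
    using assms by simp
next
  case (3 u v ps)
  then have "height a < height v"
    using assms edge_height_less by simp
  moreover have "height v \<in> {height a..height a}"
    using dir_path_height_range[OF assms] 3 by simp
  ultimately show ?thesis
    by simp
qed

lemma vertex_on_path:
  assumes P: "dir_path E a b P" and "a \<in> V" "v \<in> V" and on_path: "pos v \<in> points P"
  shows "v \<in> set P"
proof -
  have "set P \<subseteq> V"
    using dir_path_vertices[OF P \<open>a \<in> V\<close>] .
  consider "pos v \<in> pos ` set P" | e where "e \<in> path_edges P" "pos v \<in> gam e ` {0..1}"
    using on_path unfolding path_points_edges by blast
  then show ?thesis
  proof cases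
    case 1
    then show ?thesis
      using inj_on_pos \<open>set P \<subseteq> V\<close> \<open>v \<in> V\<close> by (auto dest: inj_onD)
  next
    case 2
    then have "v = fst e \<or> v = snd e"
      using vertex_on_edge dir_path_edges[OF P] \<open>v \<in> V\<close> by blast
    then show ?thesis
      using path_edges_subset[of "fst e" "snd e" P] 2(1) by auto
  qed
qed

lemma common_point_of_paths:
  assumes P: "dir_path E a b P" and Q: "dir_path E a' b' Q" and "a \<in> V" "a' \<in> V"
    and "p \<in> points P" "p \<in> points Q"
  shows "p \<in> pos ` (set P \<inter> set Q) \<or> path_edges P \<inter> path_edges Q \<noteq> {}"
proof -
  have "set P \<subseteq> V" "set Q \<subseteq> V"
    using dir_path_vertices P Q \<open>a \<in> V\<close> \<open>a' \<in> V\<close> by blast+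
  have vertex: "p \<in> pos ` (set P \<inter> set Q)" if "p \<in> pos ` set P \<or> p \<in> pos ` set Q"
    using that vertex_on_path[OF P \<open>a \<in> V\<close>] vertex_on_path[OF Q \<open>a' \<in> V\<close>]
      \<open>set P \<subseteq> V\<close> \<open>set Q \<subseteq> V\<close> \<open>p \<in> points P\<close> \<open>p \<in> points Q\<close> by blast
  show ?thesis
  proof (cases "p \<in> pos ` set P \<or> p \<in> pos ` set Q")
    case True
    then show ?thesis
      using vertex by blast
  next
    case False
    then obtain e e' where e: "e \<in> path_edges P" "p \<in> gam e ` {0..1}"
      and e': "e' \<in> path_edges Q" "p \<in> gam e' ` {0..1}"
      using \<open>p \<in> points P\<close> \<open>p \<in> points Q\<close> unfolding path_points_edges by blast
    have "e = e'"
    proof (rule ccontr)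
      assume "e \<noteq> e'"
      then have "p \<in> pos ` {fst e, snd e}"
        using edges_meet_at_vertices e e' dir_path_edges[OF P] dir_path_edges[OF Q] by blast
      moreover have "fst e \<in> set P" "snd e \<in> set P"
        using path_edges_subset[of "fst e" "snd e" P] e(1) by auto
      ultimately show False
        using False by blast
    qed
    then show ?thesis
      using e e' by blast
  qed
qed

lemma dir_path_ends: "dir_path E a b P \<Longrightarrow> a \<in> set P \<and> b \<in> set P"
  unfolding dir_path_def by auto

lemma dir_path_eq_if_set_eq:
  assumes P: "dir_path E a b P" and Q: "dir_path E a' b' Q" and "set P = set Q"
  shows "P = Q"
proof -
  have "map height Q = map height P"
    using strict_sorted_equal[OF dir_path_strict_sorted[OF P] dir_path_strict_sorted[OF Q]] \<open>set P = set Q\<close>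
    by simp
  moreover have "inj_on height (set P \<union> set Q)"
    using dir_path_distinct_heights[OF P] \<open>set P = set Q\<close> by simp
  ultimately show ?thesis
    using inj_on_map_eq_map[of height P Q] by simp
qed

lemma dir_path_eq_if_points_eq:
  assumes "a \<in> V" and P: "dir_path E a b P" and Q: "dir_path E a b Q" and "points P = points Q"
  shows "P = Q"
proof -
  have "set P \<subseteq> set Q" if "dir_path E a b P" "dir_path E a b Q" "points P = points Q" for P Q
  proof
    fix v assume "v \<in> set P"
    then have "v \<in> V" "pos v \<in> points Q"
      using dir_path_vertices[OF that(1) \<open>a \<in> V\<close>] pos_in_path_points[OF \<open>v \<in> set P\<close>] that(3)
      by auto
    then show "v \<in> set Q"
      using vertex_on_path[OF that(2) \<open>a \<in> V\<close>] by blast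
  qed
  then have "set P = set Q"
    using assms by blast
  then show ?thesis
    using dir_path_eq_if_set_eq[OF P Q] by blast
qed

lemma dir_path_edge_from_start_to_end:
  assumes X: "dir_path E a c X" and edge: "(a, c) \<in> path_edges X"
  shows "X = [a, c]"
proof (cases X rule: remdups_adj.cases)
  case (3 u v ps)
  then have "u = a" and tail: "dir_path E v c (v # ps)"
    using X by simp_all
  have "(a, c) = (a, v) \<or> (a, c) \<in> path_edges (v # ps)"
    using edge 3 \<open>u = a\<close> by simp
  then show ?thesis
  proof
    assume "(a, c) = (a, v)"
    then have "v # ps = [c]"
      using dir_path_loop[of c "v # ps"] tail by simp
    then show ?thesis
      using 3 \<open>u = a\<close> by simp
  next
    assume "(a, c) \<in> path_edges (v # ps)"
    then have "a \<in> set (v # ps)"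
      using path_edges_subset[of a c "v # ps"] by blast
    then show ?thesis
      using dir_path_distinct_heights[OF X] 3 \<open>u = a\<close> by simp
  qed
qed (use edge in simp_all)

lemma internally_disjoint_paths_comparable:
  assumes P: "dir_path E a c P" and Q: "dir_path E a c Q" and "a \<in> V"
    and disjoint: "set P \<inter> set Q \<subseteq> {a, c}"
  shows "right_of (points P) (points Q) \<or> right_of (points Q) (points P)"
proof (cases "P = Q")
  case True
  then show ?thesis
    using right_of_refl[OF path_points_height_graph[OF P]] by simp
next
  case False
  have "path_edges P \<inter> path_edges Q = {}"
  proof (rule ccontr)
    assume "path_edges P \<inter> path_edges Q \<noteq> {}"
    then obtain u v where uv: "(u, v) \<in> path_edges P" "(u, v) \<in> path_edges Q"
      by auto
    have "u \<in> set P \<inter> set Q" "v \<in> set P \<inter> set Q"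
      using path_edges_subset[OF uv(1)] path_edges_subset[OF uv(2)] by simp_all
    then have "u \<in> {a, c}" "v \<in> {a, c}"
      using disjoint by blast+
    moreover have "height u < height v"
      using edge_height_less[of u v] dir_path_edges[OF P] uv(1) by blast
    moreover have "height a \<le> height c"
      using dir_path_height_range[OF P] dir_path_ends[OF P] by simp
    ultimately have "u = a" "v = c"
      by auto
    then have "(a, c) \<in> path_edges P" "(a, c) \<in> path_edges Q"
      using uv by simp_all
    then show False
      using dir_path_edge_from_start_to_end[OF P] dir_path_edge_from_start_to_end[OF Q] False by simp
  qed
  then have common: "p \<in> pos ` (set P \<inter> set Q)" if "p \<in> points P \<inter> points Q" for p
    using common_point_of_paths[OF P Q \<open>a \<in> V\<close> \<open>a \<in> V\<close>] that by blast
  have "snd ` (points P \<inter> points Q) \<subseteq> {height a, height c}"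
  proof
    fix w assume "w \<in> snd ` (points P \<inter> points Q)"
    then obtain p where "w = snd p" "p \<in> points P \<inter> points Q"
      by (rule imageE)
    then obtain v where "v \<in> set P \<inter> set Q" "p = pos v"
      using common by blast
    then show "w \<in> {height a, height c}"
      using disjoint \<open>w = snd p\<close> by auto
  qed
  moreover have "pos a \<in> points P \<inter> points Q" "pos c \<in> points P \<inter> points Q"
    using dir_path_ends[OF P] dir_path_ends[OF Q] pos_in_path_points by auto
  ultimately have "snd ` (points P \<inter> points Q) = {height a, height c}"
    by blast
  then show ?thesis
    using height_graphs_comparable[OF path_points_height_graph[OF P] path_points_height_graph[OF Q]] by blast
qed

lemma internally_disjoint_paths_right_of_both:
  assumes P: "dir_path E a c (P @ [c])" and Q: "dir_path E a c (Q @ [c])" and "a \<in> V"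
    and "set (P @ [c]) \<inter> set (Q @ [c]) \<subseteq> {a, c}"
  obtains X where "dir_path E a c (X @ [c])"
    "right_of (points (X @ [c])) (points (P @ [c]))" "right_of (points (X @ [c])) (points (Q @ [c]))"
proof (cases "right_of (points (P @ [c])) (points (Q @ [c]))")
  case True
  then show ?thesis
    using that[OF P right_of_refl[OF path_points_height_graph[OF P]]] by blast
next
  case False
  then have "right_of (points (Q @ [c])) (points (P @ [c]))"
    using internally_disjoint_paths_comparable[OF P Q assms(3,4)] by blast
  then show ?thesis
    using that[OF Q _ right_of_refl[OF path_points_height_graph[OF Q]]] by blast
qed

lemma right_of_path_append:
  assumes X: "dir_path E a c (X @ [c])" and X': "dir_path E a c (X' @ [c])"
    and Y: "dir_path E c b (c # Y)" and Y': "dir_path E c b (c # Y')"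
    and "right_of (points (X @ [c])) (points (X' @ [c]))" "right_of (points (c # Y)) (points (c # Y'))"
  shows "right_of (points (X @ c # Y)) (points (X' @ c # Y'))"
proof -
  have common: "(fst (pos c), height c) \<in> points (X @ [c]) \<inter> points (X' @ [c]) \<inter> points (c # Y) \<inter> points (c # Y')"
    by (simp add: pos_in_path_points)
  show ?thesis
    unfolding path_points_append[of _ _ X c Y] path_points_append[of _ _ X' c Y']
    by (rule right_of_Un[OF path_points_height_graph[OF X] path_points_height_graph[OF X']
          path_points_height_graph[OF Y] path_points_height_graph[OF Y'] common assms(5,6)])
qed

lemma split_at_lowest_common_vertex:
  assumes P: "dir_path E a b P" and Q: "dir_path E a b Q" and "a \<noteq> b"
  obtains P1 c P2 Q1 Q2 where "P = P1 @ c # P2" "Q = Q1 @ c # Q2" "P1 \<noteq> []"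
    and "dir_path E a c (P1 @ [c])" "dir_path E a c (Q1 @ [c])"
    and "dir_path E c b (c # P2)" "dir_path E c b (c # Q2)"
    and "set (P1 @ [c]) \<inter> set (Q1 @ [c]) \<subseteq> {a, c}"
proof -
  define C where "C = set P \<inter> set Q - {a}"
  have "b \<in> C"
    using dir_path_ends[OF P] dir_path_ends[OF Q] \<open>a \<noteq> b\<close> unfolding C_def by blast
  then obtain c where "c \<in> C" and lowest: "\<not> (\<exists>x. x \<in> C \<and> height x < height c)"
    using ex_is_arg_min_if_finite[of C height] unfolding C_def is_arg_min_def by blast
  then have "c \<in> set P" "c \<in> set Q" "c \<noteq> a"
    unfolding C_def by auto
  obtain P1 P2 where P_split: "P = P1 @ c # P2"
    using split_list[OF \<open>c \<in> set P\<close>] by blast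
  obtain Q1 Q2 where Q_split: "Q = Q1 @ c # Q2"
    using split_list[OF \<open>c \<in> set Q\<close>] by blast
  have P1: "dir_path E a c (P1 @ [c])" and P2: "dir_path E c b (c # P2)"
    using P dir_path_append[of E a b P1 c P2] P_split by simp_all
  have Q1: "dir_path E a c (Q1 @ [c])" and Q2: "dir_path E c b (c # Q2)"
    using Q dir_path_append[of E a b Q1 c Q2] Q_split by simp_all
  have "P1 \<noteq> []"
    using P1 \<open>c \<noteq> a\<close> by (cases P1) simp_all
  have "x \<in> {a, c}" if x: "x \<in> set (P1 @ [c])" "x \<in> set (Q1 @ [c])" for x
  proof (rule ccontr)
    assume "x \<notin> {a, c}"
    then have "x \<in> C"
      using x P_split Q_split unfolding C_def by auto
    moreover have "height x \<le> height c"
      using dir_path_height_range[OF P1 x(1)] by simp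
    moreover have "height x \<noteq> height c"
    proof
      assume "height x = height c"
      then have "x = c"
        using inj_onD[OF conjunct2[OF dir_path_distinct_heights[OF P1]]] x(1) by simp
      then show False
        using \<open>x \<notin> {a, c}\<close> by simp
    qed
    ultimately show False
      using lowest by auto
  qed
  then show ?thesis
    using that[OF P_split Q_split \<open>P1 \<noteq> []\<close> P1 Q1 P2 Q2] by blast
qed

(* Cut both paths at their lowest common vertex c above a: the parts up to c meet only in a and c,
   so one lies right of the other, and the parts from c on are handled by induction. *)
lemma exists_path_right_of_both:
  assumes "dir_path E a b P" "dir_path E a b Q" "a \<in> V"
  shows "\<exists>R. dir_path E a b R \<and> right_of (points R) (points P) \<and> right_of (points R) (points Q)"
  using assms
proof (induction "length P" arbitrary: a P Q rule: less_induct)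
  case less
  note P = \<open>dir_path E a b P\<close> and Q = \<open>dir_path E a b Q\<close>
  show ?case
  proof (cases "a = b")
    case True
    then have "P = Q"
      using dir_path_loop[of a P] dir_path_loop[of a Q] P Q by simp
    then show ?thesis
      using P right_of_refl[OF path_points_height_graph[OF P]] by blast
  next
    case False
    obtain P1 c P2 Q1 Q2 where P_split: "P = P1 @ c # P2" and Q_split: "Q = Q1 @ c # Q2"
      and "P1 \<noteq> []" and P1: "dir_path E a c (P1 @ [c])" and Q1: "dir_path E a c (Q1 @ [c])"
      and P2: "dir_path E c b (c # P2)" and Q2: "dir_path E c b (c # Q2)"
      and disjoint: "set (P1 @ [c]) \<inter> set (Q1 @ [c]) \<subseteq> {a, c}"
      using P Q False by (rule split_at_lowest_common_vertex)
    obtain X where X: "dir_path E a c (X @ [c])"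
      "right_of (points (X @ [c])) (points (P1 @ [c]))" "right_of (points (X @ [c])) (points (Q1 @ [c]))"
      using P1 Q1 \<open>a \<in> V\<close> disjoint by (rule internally_disjoint_paths_right_of_both)
    have shorter: "length (c # P2) < length P"
      using P_split \<open>P1 \<noteq> []\<close> by simp
    have "c \<in> V"
      using dir_path_vertices[OF P \<open>a \<in> V\<close>] unfolding P_split by simp
    obtain R where R: "dir_path E c b R"
      "right_of (points R) (points (c # P2))" "right_of (points R) (points (c # Q2))"
      using less.hyps[OF shorter P2 Q2 \<open>c \<in> V\<close>] by blast
    obtain Y where "R = c # Y"
      using R(1) by (cases R) (auto simp: dir_path_def)
    then have Y: "dir_path E c b (c # Y)"
      and Y_right: "right_of (points (c # Y)) (points (c # P2))" "right_of (points (c # Y)) (points (c # Q2))"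
      using R by simp_all
    have "dir_path E a b (X @ c # Y)"
      using dir_path_append[of E a b X c Y] X(1) Y by simp
    moreover have "right_of (points (X @ c # Y)) (points P)"
      unfolding P_split by (rule right_of_path_append[OF X(1) P1 Y P2 X(2) Y_right(1)])
    moreover have "right_of (points (X @ c # Y)) (points Q)"
      unfolding Q_split by (rule right_of_path_append[OF X(1) Q1 Y Q2 X(3) Y_right(2)])
    ultimately show ?thesis
      by blast
  qed
qed

lemma finite_dir_paths:
  assumes "finite V" "a \<in> V"
  shows "finite {P. dir_path E a b P}"
proof (rule finite_subset)
  show "{P. dir_path E a b P} \<subseteq> {P. set P \<subseteq> V \<and> distinct P}"
    using dir_path_vertices dir_path_distinct_heights assms(2) by blast
  show "finite {P. set P \<subseteq> V \<and> distinct P}"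
    using assms(1) by (rule finite_subset_distinct)
qed

lemma rightmost_path_iff_right_of:
  "rightmost_path E pos gam a b R \<longleftrightarrow>
     dir_path E a b R \<and> (\<forall>Q. dir_path E a b Q \<longrightarrow> right_of (points R) (points Q))"
proof -
  have "points R \<subseteq> points Q \<union> Right_path pos gam Q \<longleftrightarrow> right_of (points R) (points Q)"
    if R: "dir_path E a b R" and Q: "dir_path E a b Q" for Q
  proof -
    have "hd Q = a" "last Q = b"
      using Q unfolding dir_path_def by simp_all
    then show ?thesis
      unfolding Right_path_def
      using subset_Un_Right_region_iff_right_of[OF path_points_height_graph[OF R] path_points_height_graph[OF Q]]
      by simp
  qed
  then show ?thesis
    unfolding rightmost_path_def by blast
qed

lemma rightmost_path_unique:
  assumes "a \<in> V" "rightmost_path E pos gam a b P" "rightmost_path E pos gam a b R"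
  shows "P = R"
proof -
  have P: "dir_path E a b P" and R: "dir_path E a b R"
    and "right_of (points P) (points R)" "right_of (points R) (points P)"
    using assms(2,3) unfolding rightmost_path_iff_right_of by blast+
  then have "points P = points R"
    using right_of_antisym[OF path_points_height_graph[OF P] path_points_height_graph[OF R]] by blast
  then show ?thesis
    using dir_path_eq_if_points_eq[OF \<open>a \<in> V\<close> P R] by blast
qed

end

theorem corollary1:
  fixes V :: "'v set" and E :: "('v \<times> 'v) set"
    and pos :: "'v \<Rightarrow> real \<times> real" and gam :: "'v \<times> 'v \<Rightarrow> real \<Rightarrow> real \<times> real"
  assumes "finite V" and "E \<subseteq> V \<times> V"
    and "upward_planar_drawing V E pos gam"
    and "s \<in> V" and "t \<in> V"
    and "\<exists>ps. dir_path E s t ps"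
  shows "\<exists>!ps. rightmost_path E pos gam s t ps"
proof -
  interpret upward_planar_graph V E pos gam
    using assms(2,3) by unfold_locales
  let ?paths = "{P. dir_path E s t P}"
  have "\<exists>R\<in>?paths. \<forall>Q\<in>?paths. right_of (points R) (points Q)"
  proof (rule finite_directed_has_upper_bound)
    show "finite ?paths"
      using finite_dir_paths assms(1,4) .
    show "?paths \<noteq> {}"
      using assms(6) by blast
    show "right_of (points P) (points R)"
      if "P \<in> ?paths" "Q \<in> ?paths" "R \<in> ?paths"
        and "right_of (points P) (points Q)" "right_of (points Q) (points R)" for P Q R
      using right_of_trans[OF that(4,5) path_points_height_graph[of s t Q] path_points_height_graph[of s t R]]
        that(2,3) by simp
    show "\<exists>R\<in>?paths. right_of (points R) (points P) \<and> right_of (points R) (points Q)"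
      if "P \<in> ?paths" "Q \<in> ?paths" for P Q
      using exists_path_right_of_both that assms(4) by simp
  qed
  then have "\<exists>R. rightmost_path E pos gam s t R"
    unfolding rightmost_path_iff_right_of by blast
  then show ?thesis
    using rightmost_path_unique[OF assms(4)] by blast
qed

end
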